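(* Assume $\rho_1=1$, $\rho_{1,2}<\infty$ and $\rho_2<1$, with $\lambda,B_1,B_2$ not depending on $L$. Then for every fixed integer $j\ge0$, $$\lim_{L\to\infty}L\,q_{L-j}=1,$$ where $q_{L-j}=q_{L-j}(L)$ is the stationary probability that the number in system equals $L-j$ in the system with threshold $L$.
   Context: Queueing model: Poisson arrivals of rate $\lambda>0$ to a single server; independent service times; for a threshold integer $L\ge1$, a customer whose service begins when the number of customers in the system exceeds $L$ is served with distribution function $B_2$, otherwise with $B_1$. Put $\rho_1=\lambda\int_0^\infty x\,dB_1(x)$, $\rho_{1,2}=\lambda^2\int_0^\infty x^2\,dB_1(x)$, $\rho_2=\lambda\int_0^\infty x\,dB_2(x)$. For each $L$, $q_i$ ($i=1,\dots,L$) denotes the stationary probability that the number of customers in the system equals $i$. *)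

theory Defs
  imports "HOL-Probability.Probability"
begin

text \<open>Probability that a Poisson process of rate lam has exactly k arrivals
  during a service time distributed according to B.\<close>
definition arrivals_during :: "real \<Rightarrow> real measure \<Rightarrow> nat \<Rightarrow> real" where
  "arrivals_during lam B k = (\<integral>x. exp (- lam * x) * (lam * x) ^ k / fact k \<partial>B)"

text \<open>Transition probabilities of the number in system embedded at departure
  epochs for threshold L: a service starting with more than L customers in the
  system uses B2, otherwise B1 (a service starting after an idle period starts
  with 1 customer in the system, hence uses B1).\<close>
definition thr_trans ::
  "real \<Rightarrow> real measure \<Rightarrow> real measure \<Rightarrow> nat \<Rightarrow> nat \<Rightarrow> nat \<Rightarrow> real" where
  "thr_trans lam B1 B2 L i j =
     (if i = 0 then arrivals_during lam B1 j
      else if j + 1 < i then 0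
      else if i \<le> L then arrivals_during lam B1 (j + 1 - i)
      else arrivals_during lam B2 (j + 1 - i))"

definition stationary_dist :: "(nat \<Rightarrow> nat \<Rightarrow> real) \<Rightarrow> (nat \<Rightarrow> real) \<Rightarrow> bool" where
  "stationary_dist P q \<longleftrightarrow>
     (\<forall>i. 0 \<le> q i) \<and> q sums 1 \<and> (\<forall>j. (\<lambda>i. q i * P i j) sums q j)"

end

(* Below the threshold the balance equations of the embedded chain involve only B1: dividing
   the level-crossing equations by a_0 shows q_n = q_0 u_n for n <= L, where u solves a discrete
   renewal equation whose kernel f_m = P(A > m) / a_0 (A the number of arrivals during a
   B1-service, a_0 = P(A = 0)) is a probability distribution because rho_1 = 1, is aperiodic
   because f_1 > 0, and has finite mean because rho_{1,2} is finite. The renewal theorem gives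
   u_n -> u_oo > 0, hence sum_{n<=L} u_n ~ L u_oo. Normalisation gives q_0 sum_{n<=L} u_n <= 1,
   while summing the level-crossing equations above L and using rho_2 < 1 bounds the mass above
   L by a constant times q_0. Therefore L q_0 -> 1 / u_oo and L q_{L-j} = L q_0 u_{L-j} -> 1. *)

theory Submission
  imports Defs
begin

section \<open>Sums and tails of series\<close>

definition tail :: "(nat \<Rightarrow> real) \<Rightarrow> nat \<Rightarrow> real" where
  "tail a m = suminf a - (\<Sum>k\<le>m. a k)"

lemma tail_eq: "a sums s \<Longrightarrow> tail a m = s - (\<Sum>k\<le>m. a k)"
  by (simp add: tail_def sums_iff)

lemma tail_Suc: "tail a (Suc m) = tail a m - a (Suc m)"
  by (simp add: tail_def)

lemma sum_le_sums:
  fixes a :: "nat \<Rightarrow> real"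
  assumes "\<And>k. 0 \<le> a k" "a sums s" "finite A"
  shows "(\<Sum>k\<in>A. a k) \<le> s"
  using sum_le_suminf[of a A] assms by (auto simp: sums_iff)

lemma tail_nonneg:
  fixes a :: "nat \<Rightarrow> real"
  assumes "\<And>k. 0 \<le> a k" "summable a"
  shows "0 \<le> tail a m"
  using sum_le_sums[OF assms(1) summable_sums[OF assms(2)], of "{..m}"] by (simp add: tail_def)

lemma sum_le_tail:
  fixes a :: "nat \<Rightarrow> real"
  assumes a_nonneg: "\<And>k. 0 \<le> a k" and a_summable: "summable a" and "m < k0"
  shows "(\<Sum>k=k0..K. a k) \<le> tail a m"
proof -
  have "(\<Sum>k\<le>m. a k) + (\<Sum>k=k0..K. a k) = (\<Sum>k\<in>{..m} \<union> {k0..K}. a k)"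
    by (rule sum.union_disjoint[symmetric]) (use \<open>m < k0\<close> in auto)
  also have "\<dots> \<le> suminf a"
    by (rule sum_le_suminf[OF a_summable]) (auto simp: a_nonneg)
  finally show ?thesis by (simp add: tail_def)
qed

lemma sum_triangle_swap:
  fixes h :: "nat \<Rightarrow> nat \<Rightarrow> 'a::comm_monoid_add"
  shows "(\<Sum>n=L..N. \<Sum>i=Suc L..n. h i n) = (\<Sum>i=Suc L..N. \<Sum>n=i..N. h i n)"
proof -
  have "(\<Sum>n=L..N. \<Sum>i\<in>{i \<in> {Suc L..N}. i \<le> n}. h i n) = (\<Sum>i=Suc L..N. \<Sum>n\<in>{n \<in> {L..N}. i \<le> n}. h i n)"
    by (rule sum.swap_restrict) auto
  moreover have "{i \<in> {Suc L..N}. i \<le> n} = {Suc L..n}" if "n \<in> {L..N}" for n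
    using that by auto
  moreover have "{n \<in> {L..N}. i \<le> n} = {i..N}" if "i \<in> {Suc L..N}" for i
    using that by auto
  ultimately show ?thesis
    by simp
qed

lemma sum_shift_diff:
  fixes g :: "nat \<Rightarrow> 'a::comm_monoid_add"
  assumes "i \<le> L"
  shows "(\<Sum>n=L..N. g (Suc n - i)) = (\<Sum>k=Suc L - i..Suc N - i. g k)"
  by (rule sum.reindex_bij_witness[where i="\<lambda>k. k + i - 1" and j="\<lambda>n. Suc n - i"])
     (use assms in auto)

lemma tail_tendsto_0: "summable a \<Longrightarrow> tail a \<longlonglongrightarrow> 0"
proof -
  assume "summable a"
  then have "(\<lambda>n. \<Sum>k<Suc n. a k) \<longlonglongrightarrow> suminf a"
    by (intro LIMSEQ_Suc summable_LIMSEQ)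
  then have "(\<lambda>n. suminf a - (\<Sum>k<Suc n. a k)) \<longlonglongrightarrow> suminf a - suminf a"
    by (intro tendsto_intros)
  then show ?thesis by (simp add: tail_def[abs_def] lessThan_Suc_atMost)
qed

lemma weighted_remainder_tendsto_0:
  fixes a W :: "nat \<Rightarrow> real"
  assumes a_nonneg: "\<And>k. 0 \<le> a k" and a_summable: "summable a"
    and W_nonneg: "\<And>k. 0 \<le> W k" and W_mono: "mono W" and moment: "summable (\<lambda>k. W k * a k)"
  shows "(\<lambda>M. W M * (\<Sum>k. a (k + M))) \<longlonglongrightarrow> 0"
proof (rule tendsto_sandwich[OF _ _ tendsto_const]; (intro always_eventually allI)?)
  fix M
  have a_shift: "summable (\<lambda>k. a (k + M))"
    by (rule summable_ignore_initial_segment[OF a_summable])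
  show "0 \<le> W M * (\<Sum>k. a (k + M))"
    by (intro mult_nonneg_nonneg W_nonneg suminf_nonneg a_shift a_nonneg)
  have "W M * (\<Sum>k. a (k + M)) = (\<Sum>k. W M * a (k + M))"
    by (rule suminf_mult[OF a_shift, symmetric])
  also have "\<dots> \<le> (\<Sum>k. W (k + M) * a (k + M))"
    by (intro suminf_le mult_right_mono monoD[OF W_mono] a_nonneg summable_mult a_shift
        summable_ignore_initial_segment[OF moment, of M]) simp
  finally show "W M * (\<Sum>k. a (k + M)) \<le> (\<Sum>k. W (k + M) * a (k + M))" .
next
  have "(\<lambda>M. (\<Sum>k. W k * a k) - (\<Sum>k<M. W k * a k)) \<longlonglongrightarrow> (\<Sum>k. W k * a k) - (\<Sum>k. W k * a k)"
    by (intro tendsto_intros summable_LIMSEQ moment)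
  then show "(\<lambda>M. \<Sum>k. W (k + M) * a (k + M)) \<longlonglongrightarrow> 0"
    using suminf_minus_initial_segment[OF moment] by simp
qed

lemma sums_weighted_tail:
  fixes a w :: "nat \<Rightarrow> real"
  assumes a_nonneg: "\<And>k. 0 \<le> a k" and w_nonneg: "\<And>k. 0 \<le> w k" and a_summable: "summable a"
    and moment: "summable (\<lambda>k. (\<Sum>m<k. w m) * a k)"
  shows "(\<lambda>m. w m * tail a m) sums (\<Sum>k. (\<Sum>m<k. w m) * a k)"
proof -
  define W where "W k = (\<Sum>m<k. w m)" for k
  define T where "T M = (\<Sum>k. a (k + M))" for M
  have T_eq: "T M = suminf a - (\<Sum>k<M. a k)" for M
    using suminf_minus_initial_segment[OF a_summable] by (simp add: T_def)
  have partial: "(\<Sum>m<M. w m * T (Suc m)) = (\<Sum>k<M. W k * a k) + W M * T M" for M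
  proof (induction M)
    case (Suc M)
    have "T M = a M + T (Suc M)" by (simp add: T_eq)
    then show ?case using Suc by (simp add: W_def algebra_simps)
  qed (simp add: W_def)
  have moment': "summable (\<lambda>k. W k * a k)"
    using moment by (simp add: W_def)
  have "(\<lambda>M. W M * T M) \<longlonglongrightarrow> 0"
    unfolding T_def
  proof (rule weighted_remainder_tendsto_0[OF a_nonneg a_summable _ _ moment'])
    show "0 \<le> W k" for k
      unfolding W_def by (simp add: sum_nonneg w_nonneg)
    show "mono W"
      unfolding W_def by (intro monoI sum_mono2) (auto simp: w_nonneg)
  qed
  then have "(\<lambda>M. (\<Sum>k<M. W k * a k) + W M * T M) \<longlonglongrightarrow> (\<Sum>k. W k * a k) + 0"
    by (intro tendsto_intros summable_LIMSEQ moment')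
  moreover have tail_T: "tail a m = T (Suc m)" for m
    by (simp add: tail_def T_eq lessThan_Suc_atMost)
  ultimately show ?thesis
    unfolding sums_def tail_T partial by (simp add: W_def)
qed

corollary sums_tail:
  fixes a :: "nat \<Rightarrow> real"
  assumes "\<And>k. 0 \<le> a k" "summable a" "(\<lambda>k. real k * a k) sums \<mu>"
  shows "tail a sums \<mu>"
  using sums_weighted_tail[of a "\<lambda>_. 1"] assms by (simp add: sums_iff)

section \<open>Limits of real sequences\<close>

lemma cesaro_mean_tendsto_0:
  fixes x :: "nat \<Rightarrow> real"
  assumes x: "x \<longlonglongrightarrow> 0"
  shows "(\<lambda>n. (\<Sum>i\<le>n. x i) / real n) \<longlonglongrightarrow> 0"
proof (rule tendstoI)
  fix r :: real assume r: "0 < r"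
  with x obtain N where N: "\<And>i. N \<le> i \<Longrightarrow> \<bar>x i\<bar> < r / 2"
    unfolding LIMSEQ_iff by (metis half_gt_zero real_norm_def diff_zero)
  define C where "C = (\<Sum>i<N. \<bar>x i\<bar>)"
  have bound: "\<bar>\<Sum>i\<le>n. x i\<bar> \<le> C + (real n + 1) * (r / 2)" for n
  proof -
    have "\<bar>\<Sum>i\<le>n. x i\<bar> \<le> (\<Sum>i\<le>n. (if i < N then \<bar>x i\<bar> else 0) + r / 2)"
      by (rule order.trans[OF sum_abs sum_mono]) (use r in \<open>auto simp: not_less dest!: N\<close>)
    also have "\<dots> = (\<Sum>i\<in>{..n} \<inter> {..<N}. \<bar>x i\<bar>) + (real n + 1) * (r / 2)"
      by (simp add: sum.distrib sum.inter_restrict)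
    also have "(\<Sum>i\<in>{..n} \<inter> {..<N}. \<bar>x i\<bar>) \<le> C"
      unfolding C_def by (rule sum_mono2) auto
    finally show ?thesis by simp
  qed
  have "(\<lambda>n. (C + r / 2) / real n) \<longlonglongrightarrow> 0"
    by (rule lim_const_over_n)
  then have "eventually (\<lambda>n. (C + r / 2) / real n < r / 2) sequentially"
    using r by (intro order_tendstoD) auto
  then show "eventually (\<lambda>n. dist ((\<Sum>i\<le>n. x i) / real n) 0 < r) sequentially"
    using eventually_gt_at_top[of 0]
  proof eventually_elim
    case (elim n)
    have "\<bar>\<Sum>i\<le>n. x i\<bar> / real n \<le> (C + (real n + 1) * (r / 2)) / real n"
      by (rule divide_right_mono[OF bound]) simp
    also have "\<dots> = (C + r / 2) / real n + r / 2"
      using elim(2) by (simp add: field_simps)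
    finally have "\<bar>\<Sum>i\<le>n. x i\<bar> / real n < r"
      using elim(1) by linarith
    then show ?case by (simp add: dist_real_def)
  qed
qed

lemma cesaro_mean_tendsto:
  fixes x :: "nat \<Rightarrow> real"
  assumes x: "x \<longlonglongrightarrow> c"
  shows "(\<lambda>n. (\<Sum>i\<le>n. x i) / real n) \<longlonglongrightarrow> c"
proof -
  have "(\<lambda>n. (\<Sum>i\<le>n. x i - c) / real n) \<longlonglongrightarrow> 0"
    by (rule cesaro_mean_tendsto_0) (use tendsto_diff[OF x tendsto_const[of c]] in simp)
  moreover have "(\<Sum>i\<le>n. x i) / real n = (\<Sum>i\<le>n. x i - c) / real n + c * (real (Suc n) / real n)" for n
    by (simp add: sum_subtractf add_divide_distrib[symmetric] algebra_simps)
  ultimately show ?thesis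
    using tendsto_add[OF _ tendsto_mult[OF tendsto_const LIMSEQ_Suc_n_over_n], of _ 0 c] by simp
qed

lemma tendsto_real_mult_of_reciprocal_bounds:
  fixes p U :: "nat \<Rightarrow> real"
  assumes U: "(\<lambda>n. U n / real n) \<longlonglongrightarrow> c" and c: "0 < c" and K: "0 \<le> K"
    and U_pos: "\<And>n. 0 < U n"
    and upper: "\<And>n. 1 \<le> n \<Longrightarrow> p n * U n \<le> 1"
    and lower: "\<And>n. 1 \<le> n \<Longrightarrow> 1 \<le> p n * (U n + K)"
  shows "(\<lambda>n. real n * p n) \<longlonglongrightarrow> 1 / c"
proof (rule tendsto_sandwich)
  have "(\<lambda>n. 1 / (U n / real n + K / real n)) \<longlonglongrightarrow> 1 / (c + 0)"
    using c by (intro tendsto_intros U lim_const_over_n) auto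
  then have "(\<lambda>n. 1 / (U n / real n + K / real n)) \<longlonglongrightarrow> 1 / c"
    by simp
  then show "(\<lambda>n. real n / (U n + K)) \<longlonglongrightarrow> 1 / c"
    by (rule Lim_transform_eventually)
       (use eventually_gt_at_top[of "0::nat"] in
        \<open>eventually_elim, simp add: add_divide_distrib[symmetric]\<close>)
  have "(\<lambda>n. 1 / (U n / real n)) \<longlonglongrightarrow> 1 / c"
    using c by (intro tendsto_intros U) auto
  then show "(\<lambda>n. real n / U n) \<longlonglongrightarrow> 1 / c"
    by (rule Lim_transform_eventually)
       (use eventually_gt_at_top[of "0::nat"] in \<open>eventually_elim, simp\<close>)
  show "eventually (\<lambda>n. real n / (U n + K) \<le> real n * p n) sequentially"
    using eventually_ge_at_top[of 1]
  proof eventually_elim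
    case (elim n)
    have "1 / (U n + K) \<le> p n"
      using lower[OF elim] U_pos[of n] K by (simp add: divide_le_eq algebra_simps)
    then have "real n * (1 / (U n + K)) \<le> real n * p n"
      by (rule mult_left_mono) simp
    then show ?case by simp
  qed
  show "eventually (\<lambda>n. real n * p n \<le> real n / U n) sequentially"
    using eventually_ge_at_top[of 1]
  proof eventually_elim
    case (elim n)
    have "p n \<le> 1 / U n"
      using upper[OF elim] U_pos[of n] by (simp add: le_divide_eq)
    then have "real n * p n \<le> real n * (1 / U n)"
      by (rule mult_left_mono) simp
    then show ?case by simp
  qed
qed

lemma limsup_eq_if_limit_points_eq:
  fixes x :: "nat \<Rightarrow> real"
  assumes bounded: "\<And>n. \<bar>x n\<bar> \<le> M"
    and limit_points: "\<And>s l. filterlim s at_top sequentially \<Longrightarrow> (\<lambda>k. x (s k)) \<longlonglongrightarrow> l \<Longrightarrow>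
        (\<And>e. 0 < e \<Longrightarrow> eventually (\<lambda>n. x n \<le> l + e) sequentially) \<Longrightarrow> l = c"
  shows "limsup x = ereal c"
proof -
  have "limsup x \<le> ereal M"
    using bounded by (intro Limsup_bounded) (auto simp: abs_le_iff)
  moreover have "ereal (- M) \<le> limsup x"
    using bounded
    by (intro order.trans[OF Liminf_bounded Liminf_le_Limsup]) (auto simp: abs_le_iff minus_le_iff)
  ultimately obtain l where l: "limsup x = ereal l"
    by (cases "limsup x") auto
  obtain r :: "nat \<Rightarrow> nat" where r: "strict_mono r" "((\<lambda>n. ereal (x n)) \<circ> r) \<longlonglongrightarrow> limsup x"
    using limsup_subseq_lim by blast
  have "l = c"
  proof (rule limit_points)
    show "filterlim r at_top sequentially"
      using filterlim_subseq[OF r(1)] by simp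
    show "(\<lambda>k. x (r k)) \<longlonglongrightarrow> l"
      using r(2) l by (simp add: o_def)
    show "eventually (\<lambda>n. x n \<le> l + e) sequentially" if "0 < e" for e
    proof -
      have "limsup x < ereal (l + e)" using l that by simp
      from Limsup_lessD[OF this] show ?thesis by (auto elim: eventually_mono)
    qed
  qed
  with l show ?thesis by simp
qed

section \<open>The discrete renewal theorem\<close>

function renewal_seq :: "(nat \<Rightarrow> real) \<Rightarrow> (nat \<Rightarrow> real) \<Rightarrow> nat \<Rightarrow> real" where
  "renewal_seq f b n = b n + (\<Sum>i<n. f (n - i) * renewal_seq f b i)"
  by auto
termination by (relation "Wellfounded.measure (\<lambda>(f, b, n). n)") auto

declare renewal_seq.simps [simp del]

locale renewal_kernel =
  fixes f :: "nat \<Rightarrow> real"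
  assumes f_0: "f 0 = 0" and f_nonneg: "\<And>m. 0 \<le> f m" and f_sums: "f sums 1"
    and f_1_pos: "0 < f 1" and summable_tail_f: "summable (tail f)"
begin

lemma tail_f_eq: "tail f m = 1 - (\<Sum>k\<le>m. f k)"
  by (rule tail_eq[OF f_sums])

lemma tail_f_0: "tail f 0 = 1"
  by (simp add: tail_f_eq f_0)

lemma tail_f_nonneg: "0 \<le> tail f m"
  using tail_nonneg[OF f_nonneg sums_summable[OF f_sums]] .

lemma f_le_1: "f m \<le> 1"
  using sum_le_sums[OF f_nonneg f_sums, of "{m}"] by simp

lemma partial_sums_f_tendsto: "(\<lambda>n. \<Sum>k\<le>n. f k) \<longlonglongrightarrow> 1"
  using tendsto_diff[OF tendsto_const[of 1] tail_tendsto_0[OF sums_summable[OF f_sums]]]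
  by (simp add: tail_f_eq)

lemma suminf_tail_f_ge_1: "1 \<le> suminf (tail f)"
  using sum_le_suminf[OF summable_tail_f, of "{0}"] tail_f_nonneg by (simp add: tail_f_0)

lemma convolution_tail_f:
  assumes x_eq: "\<And>n. x n = b n + (\<Sum>i<n. f (n - i) * x i)"
  shows "(\<Sum>m\<le>n. tail f m * x (n - m)) = (\<Sum>k\<le>n. b k)"
proof -
  have "(\<Sum>i\<le>n. tail f (n - i) * x i) = (\<Sum>k\<le>n. b k)"
  proof (induction n)
    case 0
    then show ?case using x_eq[of 0] by (simp add: tail_f_0)
  next
    case (Suc n)
    have "(\<Sum>i\<le>n. tail f (Suc n - i) * x i)
        = (\<Sum>i\<le>n. tail f (n - i) * x i) - (\<Sum>i<Suc n. f (Suc n - i) * x i)"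
      by (simp add: Suc_diff_le tail_Suc left_diff_distrib sum_subtractf lessThan_Suc_atMost)
    then show ?case using Suc x_eq[of "Suc n"] by (simp add: tail_f_0)
  qed
  moreover have "(\<Sum>m\<le>n. tail f m * x (n - m)) = (\<Sum>i\<le>n. tail f (n - i) * x i)"
    by (rule sum.reindex_bij_witness[where i="\<lambda>i. n - i" and j="\<lambda>i. n - i"]) auto
  ultimately show ?thesis by simp
qed

lemma renewal_seq_nonneg: "(\<And>n. 0 \<le> b n) \<Longrightarrow> 0 \<le> renewal_seq f b n"
proof (induction n rule: less_induct)
  case (less n)
  then show ?case
    unfolding renewal_seq.simps[of f b n]
    by (intro add_nonneg_nonneg sum_nonneg mult_nonneg_nonneg f_nonneg less) auto
qed

lemma renewal_seq_le_suminf: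
  assumes b_nonneg: "\<And>n. 0 \<le> b n" and b_summable: "summable b"
  shows "renewal_seq f b n \<le> suminf b"
proof -
  have "renewal_seq f b n = tail f 0 * renewal_seq f b (n - 0)"
    by (simp add: tail_f_0)
  also have "\<dots> \<le> (\<Sum>m\<le>n. tail f m * renewal_seq f b (n - m))"
    by (rule member_le_sum)
       (auto intro: mult_nonneg_nonneg tail_f_nonneg renewal_seq_nonneg b_nonneg)
  also have "\<dots> = (\<Sum>k\<le>n. b k)"
    by (rule convolution_tail_f[OF renewal_seq.simps])
  also have "\<dots> \<le> suminf b"
    by (rule sum_le_suminf[OF b_summable]) (auto simp: b_nonneg)
  finally show ?thesis .
qed

lemma renewal_step_le:
  assumes x_eq: "\<And>n. x n = b n + (\<Sum>i<n. f (n - i) * x i)"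
    and x_le: "\<And>i. x i \<le> C + (if i < n0 then D else 0)" and D: "0 \<le> D" and n: "1 \<le> n"
  shows "x n \<le> b n + f 1 * x (n - 1) + C * ((\<Sum>k\<le>n. f k) - f 1) + D * (\<Sum>i<n0. f (n - i))"
proof -
  obtain m where n: "n = Suc m" using n by (cases n) auto
  have "(\<Sum>i<m. f (n - i) * x i) \<le> (\<Sum>i<m. f (n - i) * (C + (if i < n0 then D else 0)))"
    by (intro sum_mono mult_left_mono x_le f_nonneg)
  also have "\<dots> = C * (\<Sum>i<m. f (n - i)) + D * (\<Sum>i\<in>{..<m} \<inter> {..<n0}. f (n - i))"
    by (auto simp: algebra_simps sum.distrib sum_distrib_left sum.inter_restrict intro!: sum.cong)
  also have "(\<Sum>i<m. f (n - i)) = (\<Sum>k\<le>n. f k) - f 1"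
    using sum.atLeastAtMost_rev[of "\<lambda>k. f k" 0 n]
    by (simp add: n atLeast0AtMost lessThan_Suc_atMost[symmetric] sum.lessThan_Suc f_0)
  also have "(\<Sum>i\<in>{..<m} \<inter> {..<n0}. f (n - i)) \<le> (\<Sum>i<n0. f (n - i))"
    by (rule sum_mono2) (auto simp: f_nonneg)
  finally show ?thesis
    using x_eq[of n] D by (simp add: n mult_left_mono)
qed

text \<open>Aperiodicity enters here: in the renewal equation at \<open>n = s k\<close> all terms but
  \<open>f 1 * x (n - 1)\<close> are asymptotically at most \<open>l * (1 - f 1)\<close>, so that term is asymptotically
  at least \<open>l * f 1\<close>.\<close>
lemma limit_point_shift_lower:
  assumes x_eq: "\<And>n. x n = b n + (\<Sum>i<n. f (n - i) * x i)"
    and bounded: "\<And>n. \<bar>x n\<bar> \<le> M" and b_lim: "b \<longlonglongrightarrow> 0"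
    and s: "filterlim s at_top sequentially" and lim: "(\<lambda>k. x (s k)) \<longlonglongrightarrow> l"
    and above: "\<And>e. 0 < e \<Longrightarrow> eventually (\<lambda>n. x n \<le> l + e) sequentially"
    and "a < l"
  shows "eventually (\<lambda>k. a < x (s k - 1)) sequentially"
proof -
  define e where "e = (l - a) * f 1 / 4"
  have e: "0 < e" using \<open>a < l\<close> f_1_pos by (simp add: e_def)
  define D where "D = M + \<bar>l\<bar>"
  have D: "0 \<le> D" using bounded[of 0] by (simp add: D_def)
  from above[OF e] obtain n0 where n0: "\<And>n. n0 \<le> n \<Longrightarrow> x n \<le> l + e"
    by (auto simp: eventually_sequentially)
  have x_le: "x i \<le> (l + e) + (if i < n0 then D else 0)" for i
    using n0[of i] bounded[of i] e by (auto simp: D_def abs_le_iff)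
  define y where "y k = x (s k) - b (s k) - (l + e) * ((\<Sum>j\<le>s k. f j) - f 1)
      - D * (\<Sum>i<n0. f (s k - i))" for k
  have "(\<lambda>k. f (s k - i)) \<longlonglongrightarrow> 0" for i
    by (rule filterlim_compose[OF _ filterlim_compose[OF filterlim_minus_const_nat_at_top s]])
       (rule summable_LIMSEQ_zero[OF sums_summable[OF f_sums]])
  then have "y \<longlonglongrightarrow> l - 0 - (l + e) * (1 - f 1) - D * (\<Sum>i<n0. 0)"
    unfolding y_def[abs_def]
    by (intro tendsto_intros lim filterlim_compose[OF b_lim s]
        filterlim_compose[OF partial_sums_f_tendsto s])
  moreover have "l * f 1 - 2 * e < l - 0 - (l + e) * (1 - f 1) - D * (\<Sum>i<n0. 0)"
    using e f_1_pos f_le_1[of 1] by (simp add: algebra_simps) (smt (verit) mult_pos_pos)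
  ultimately have "eventually (\<lambda>k. l * f 1 - 2 * e < y k) sequentially"
    by (rule order_tendstoD)
  then show ?thesis
    using s[unfolded filterlim_at_top, rule_format, of 1]
  proof eventually_elim
    case (elim k)
    have "y k \<le> f 1 * x (s k - 1)"
      using renewal_step_le[OF x_eq x_le D elim(2)] by (simp add: y_def)
    moreover have "l * f 1 - 2 * e = f 1 * (l - (l - a) / 2)"
      by (simp add: e_def field_simps)
    ultimately have "f 1 * (l - (l - a) / 2) < f 1 * x (s k - 1)"
      using elim(1) by linarith
    then have "l - (l - a) / 2 < x (s k - 1)"
      using f_1_pos by simp
    then show ?case using \<open>a < l\<close> by (simp add: field_simps)
  qed
qed

lemma limit_point_shift:
  assumes x_eq: "\<And>n. x n = b n + (\<Sum>i<n. f (n - i) * x i)"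
    and bounded: "\<And>n. \<bar>x n\<bar> \<le> M" and b_lim: "b \<longlonglongrightarrow> 0"
    and s: "filterlim s at_top sequentially" and lim: "(\<lambda>k. x (s k)) \<longlonglongrightarrow> l"
    and above: "\<And>e. 0 < e \<Longrightarrow> eventually (\<lambda>n. x n \<le> l + e) sequentially"
  shows "(\<lambda>k. x (s k - 1)) \<longlonglongrightarrow> l"
proof (rule order_tendstoI)
  fix a assume "l < a"
  then have "eventually (\<lambda>n. x n \<le> l + (a - l) / 2) sequentially"
    by (intro above) simp
  from eventually_compose_filterlim[OF this
      filterlim_compose[OF filterlim_minus_const_nat_at_top[of 1] s]]
  show "eventually (\<lambda>k. x (s k - 1) < a) sequentially"
    by (rule eventually_mono) (use \<open>l < a\<close> in \<open>simp add: field_simps\<close>)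
next
  fix a assume "a < l"
  then show "eventually (\<lambda>k. a < x (s k - 1)) sequentially"
    using limit_point_shift_lower[OF x_eq bounded b_lim s lim] above by blast
qed

lemma limit_point_shift_all:
  assumes x_eq: "\<And>n. x n = b n + (\<Sum>i<n. f (n - i) * x i)"
    and bounded: "\<And>n. \<bar>x n\<bar> \<le> M" and b_lim: "b \<longlonglongrightarrow> 0"
    and s: "filterlim s at_top sequentially" and lim: "(\<lambda>k. x (s k)) \<longlonglongrightarrow> l"
    and above: "\<And>e. 0 < e \<Longrightarrow> eventually (\<lambda>n. x n \<le> l + e) sequentially"
  shows "(\<lambda>k. x (s k - m)) \<longlonglongrightarrow> l"
proof (induction m)
  case (Suc m)
  have "filterlim (\<lambda>k. s k - m) at_top sequentially"
    by (rule filterlim_compose[OF filterlim_minus_const_nat_at_top s])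
  from limit_point_shift[OF x_eq bounded b_lim this Suc above]
  show ?case by simp
qed (simp add: lim)

text \<open>Along a sequence realising the limit superior all shifts of \<open>x\<close> converge to \<open>l\<close>, so
  Tannery's theorem passes to the limit in the convolution identity.\<close>
lemma limit_point_eq:
  assumes x_eq: "\<And>n. x n = b n + (\<Sum>i<n. f (n - i) * x i)"
    and bounded: "\<And>n. \<bar>x n\<bar> \<le> M" and b_summable: "summable b"
    and s: "filterlim s at_top sequentially" and lim: "(\<lambda>k. x (s k)) \<longlonglongrightarrow> l"
    and above: "\<And>e. 0 < e \<Longrightarrow> eventually (\<lambda>n. x n \<le> l + e) sequentially"
  shows "l * suminf (tail f) = suminf b"
proof -
  define a where "a m k = (if m \<le> s k then tail f m * x (s k - m) else 0)" for m k
  have "(\<lambda>k. a m k) \<longlonglongrightarrow> tail f m * l" for m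
  proof (rule Lim_transform_eventually)
    show "(\<lambda>k. tail f m * x (s k - m)) \<longlonglongrightarrow> tail f m * l"
      by (intro tendsto_intros limit_point_shift_all[OF x_eq bounded _ s lim above]
          summable_LIMSEQ_zero b_summable)
    show "eventually (\<lambda>k. tail f m * x (s k - m) = a m k) sequentially"
      using s[unfolded filterlim_at_top, rule_format, of m] by eventually_elim (simp add: a_def)
  qed
  moreover have "eventually (\<lambda>(m, k). norm (a m k) \<le> tail f m * M) (at_top \<times>\<^sub>F sequentially)"
    using order.trans[OF abs_ge_zero bounded[of 0]] bounded tail_f_nonneg
    by (intro always_eventually) (auto simp: a_def abs_mult intro: mult_left_mono)
  ultimately have "(\<lambda>k. suminf (\<lambda>m. a m k)) \<longlonglongrightarrow> (\<Sum>m. tail f m * l)"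
    using tannerys_theorem[of a _ sequentially] summable_mult2[OF summable_tail_f, of M] by simp
  moreover have "suminf (\<lambda>m. a m k) = (\<Sum>j\<le>s k. b j)" for k
  proof -
    have "(\<lambda>m. a m k) sums (\<Sum>m\<le>s k. tail f m * x (s k - m))"
      using sums_If_finite_set[of "{..s k}" "\<lambda>m. tail f m * x (s k - m)"]
      by (simp add: a_def[abs_def])
    then show ?thesis by (simp add: sums_iff convolution_tail_f[OF x_eq])
  qed
  moreover have "(\<lambda>k. \<Sum>j\<le>s k. b j) \<longlonglongrightarrow> suminf b"
    using filterlim_compose[OF tendsto_diff[OF tendsto_const[of "suminf b"] tail_tendsto_0[OF b_summable]] s]
    by (simp add: tail_def)
  ultimately have "(\<Sum>m. tail f m * l) = suminf b"
    by (simp add: LIMSEQ_unique)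
  then show ?thesis
    using suminf_mult2[OF summable_tail_f, of l] by (simp add: mult.commute)
qed

theorem renewal_theorem:
  assumes b_nonneg: "\<And>n. 0 \<le> b n" and b_summable: "summable b"
  shows "renewal_seq f b \<longlonglongrightarrow> suminf b / suminf (tail f)"
proof -
  define u where "u = renewal_seq f b"
  define c where "c = suminf b / suminf (tail f)"
  have mean_pos: "0 < suminf (tail f)"
    using suminf_tail_f_ge_1 by simp
  have bounded: "\<bar>u n\<bar> \<le> suminf b" and bounded': "\<bar>- u n\<bar> \<le> suminf b" for n
    using renewal_seq_nonneg[OF b_nonneg] renewal_seq_le_suminf[OF b_nonneg b_summable]
    by (simp_all add: u_def)
  text \<open>The limit inferior is handled as the limit superior of \<open>- u\<close>, which solves the
    renewal equation with source \<open>- b\<close>.\<close>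
  have u_eq: "u n = b n + (\<Sum>i<n. f (n - i) * u i)"
    and neg_u_eq: "- u n = - b n + (\<Sum>i<n. f (n - i) * - u i)" for n
    unfolding u_def by (subst renewal_seq.simps; simp add: sum_negf)+
  have "limsup u = ereal c"
    by (rule limsup_eq_if_limit_points_eq[OF bounded])
       (use limit_point_eq[OF u_eq bounded b_summable] mean_pos in \<open>simp add: c_def field_simps\<close>)
  moreover have "limsup (\<lambda>n. - u n) = ereal (- c)"
    by (rule limsup_eq_if_limit_points_eq[OF bounded'])
       (use limit_point_eq[OF neg_u_eq bounded' summable_minus[OF b_summable]] mean_pos
        in \<open>simp add: c_def suminf_minus[OF b_summable] field_simps\<close>)
  then have "liminf u = ereal c"
    using ereal_Liminf_uminus[of sequentially "\<lambda>n. ereal (- u n)"] by simp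
  ultimately show ?thesis
    using limsup_le_liminf_real[of u c] by (simp add: u_def c_def)
qed

end

section \<open>Poisson arrivals during a service time\<close>

lemma sums_integral_nonneg:
  fixes g :: "nat \<Rightarrow> 'a \<Rightarrow> real"
  assumes g_nonneg: "AE x in M. \<forall>k. 0 \<le> g k x"
    and g_sums: "AE x in M. (\<lambda>k. g k x) sums G x"
    and g_meas: "\<And>k. g k \<in> borel_measurable M" and G_int: "integrable M G"
  shows "(\<lambda>k. \<integral>x. g k x \<partial>M) sums (\<integral>x. G x \<partial>M)"
proof -
  have partial_le: "AE x in M. (\<Sum>k\<in>A. g k x) \<le> G x" if A: "finite A" for A
    using g_nonneg g_sums
  proof eventually_elim
    case (elim x)
    then show ?case using sum_le_sums[of "\<lambda>k. g k x" "G x" A] A by simp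
  qed
  have g_int: "integrable M (g k)" for k
  proof (rule Bochner_Integration.integrable_bound[OF G_int g_meas])
    show "AE x in M. norm (g k x) \<le> norm (G x)"
      using g_nonneg partial_le[of "{k}", simplified] by eventually_elim auto
  qed
  have norm_eq: "(\<integral>x. norm (g k x) \<partial>M) = (\<integral>x. g k x \<partial>M)" for k
    by (rule integral_cong_AE) (use g_meas g_nonneg in auto)
  have "summable (\<lambda>k. \<integral>x. norm (g k x) \<partial>M)"
  proof (rule summableI_nonneg_bounded)
    fix n
    have "(\<Sum>k<n. \<integral>x. norm (g k x) \<partial>M) = (\<integral>x. (\<Sum>k<n. g k x) \<partial>M)"
      by (simp only: norm_eq Bochner_Integration.integral_sum[OF g_int])
    also have "\<dots> \<le> (\<integral>x. G x \<partial>M)"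
      by (intro integral_mono_AE Bochner_Integration.integrable_sum g_int G_int partial_le) simp
    finally show "(\<Sum>k<n. \<integral>x. norm (g k x) \<partial>M) \<le> (\<integral>x. G x \<partial>M)" .
  qed simp
  moreover have "AE x in M. summable (\<lambda>k. norm (g k x))"
    using g_nonneg g_sums by eventually_elim (auto simp: sums_iff)
  ultimately have "(\<lambda>k. \<integral>x. g k x \<partial>M) sums (\<integral>x. (\<Sum>k. g k x) \<partial>M)"
    and suminf_int: "integrable M (\<lambda>x. \<Sum>k. g k x)"
    using sums_integral integrable_suminf g_int by blast+
  moreover have "(\<integral>x. (\<Sum>k. g k x) \<partial>M) = (\<integral>x. G x \<partial>M)"
    by (rule integral_cong_AE)
       (use g_sums borel_measurable_integrable[OF G_int] borel_measurable_integrable[OF suminf_int]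
        in \<open>auto simp: sums_iff\<close>)
  ultimately show ?thesis by simp
qed

definition poisson_term :: "real \<Rightarrow> nat \<Rightarrow> real" where
  "poisson_term y k = exp (- y) * y ^ k / fact k"

lemma poisson_term_nonneg: "0 \<le> y \<Longrightarrow> 0 \<le> poisson_term y k"
  by (simp add: poisson_term_def)

lemma poisson_term_Suc: "real (Suc k) * poisson_term y (Suc k) = y * poisson_term y k"
  by (simp add: poisson_term_def field_simps del: of_nat_Suc)

lemma sums_poisson_term: "(\<lambda>k. poisson_term y k) sums 1"
  using sums_mult[OF exp_converges[of y], of "exp (- y)"]
  by (simp add: poisson_term_def exp_minus field_simps)

lemma sums_poisson_mean: "(\<lambda>k. real k * poisson_term y k) sums y"
  using sums_Suc_iff[of "\<lambda>k. real k * poisson_term y k" y] sums_mult[OF sums_poisson_term, of y]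
  by (simp only: poisson_term_Suc) simp

lemma sums_poisson_factorial_moment: "(\<lambda>k. real k * (real k - 1) * poisson_term y k) sums y\<^sup>2"
proof -
  have "real (Suc k) * (real (Suc k) - 1) * poisson_term y (Suc k)
      = real k * (real (Suc k) * poisson_term y (Suc k))" for k
    by (simp add: algebra_simps)
  then have "(\<lambda>k. real (Suc k) * (real (Suc k) - 1) * poisson_term y (Suc k))
      = (\<lambda>k. y * (real k * poisson_term y k))"
    by (simp only: poisson_term_Suc) (simp add: algebra_simps)
  then have "(\<lambda>k. real (Suc k) * (real (Suc k) - 1) * poisson_term y (Suc k)) sums (y * y)"
    using sums_mult[OF sums_poisson_mean, of y] by simp
  then show ?thesis
    using sums_Suc_iff[of "\<lambda>k. real k * (real k - 1) * poisson_term y k" "y * y"]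
    by (simp add: power2_eq_square)
qed

locale service_distribution =
  fixes lam :: real and B :: "real measure"
  assumes prob: "prob_space B" and sets_B: "sets B = sets borel"
    and nonneg: "AE x in B. 0 \<le> x" and lam_pos: "0 < lam"
begin

lemma arrivals_during_eq: "arrivals_during lam B k = (\<integral>x. poisson_term (lam * x) k \<partial>B)"
  by (simp add: arrivals_during_def poisson_term_def)

lemma measurable_B_iff: "g \<in> borel_measurable B \<longleftrightarrow> g \<in> borel_measurable borel"
  for g :: "real \<Rightarrow> real"
  using measurable_cong_sets[OF sets_B refl, where N="borel :: real measure"] by simp

lemma sums_integral_poisson:
  assumes terms_nonneg: "\<And>k y. 0 \<le> y \<Longrightarrow> 0 \<le> w k * poisson_term y k"
    and terms_sums: "\<And>y. 0 \<le> y \<Longrightarrow> (\<lambda>k. w k * poisson_term y k) sums G y"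
    and G_int: "integrable B (\<lambda>x. G (lam * x))"
  shows "(\<lambda>k. w k * arrivals_during lam B k) sums (\<integral>x. G (lam * x) \<partial>B)"
proof -
  have AE_nonneg: "AE x in B. 0 \<le> lam * x"
    using nonneg by eventually_elim (use lam_pos in simp)
  have "(\<lambda>k. \<integral>x. w k * poisson_term (lam * x) k \<partial>B) sums (\<integral>x. G (lam * x) \<partial>B)"
  proof (rule sums_integral_nonneg[OF _ _ _ G_int])
    show "AE x in B. \<forall>k. 0 \<le> w k * poisson_term (lam * x) k"
      using AE_nonneg by eventually_elim (use terms_nonneg in blast)
    show "AE x in B. (\<lambda>k. w k * poisson_term (lam * x) k) sums G (lam * x)"
      using AE_nonneg by eventually_elim (rule terms_sums)
    show "(\<lambda>x. w k * poisson_term (lam * x) k) \<in> borel_measurable B" for k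
      unfolding measurable_B_iff poisson_term_def by measurable
  qed
  then show ?thesis by (simp add: arrivals_during_eq)
qed

lemma arrivals_during_nonneg: "0 \<le> arrivals_during lam B k"
  unfolding arrivals_during_eq
  by (rule integral_nonneg_AE) (use nonneg lam_pos in \<open>auto elim!: eventually_mono intro: poisson_term_nonneg\<close>)

lemma sums_arrivals_during: "arrivals_during lam B sums 1"
proof -
  have "(\<lambda>k. 1 * arrivals_during lam B k) sums (\<integral>x. 1 \<partial>B)"
    by (rule sums_integral_poisson[where G="\<lambda>_. 1"])
       (simp_all add: poisson_term_nonneg sums_poisson_term finite_measure.integrable_const[OF prob_space.axioms(1)[OF prob]])
  then show ?thesis
    using prob_space.prob_space[OF prob] by simp
qed

lemma sums_arrivals_during_mean:
  "integrable B (\<lambda>x. x) \<Longrightarrow> (\<lambda>k. real k * arrivals_during lam B k) sums (lam * (\<integral>x. x \<partial>B))"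
  by (rule sums_integral_poisson[where G="\<lambda>y. y", simplified])
     (simp_all add: poisson_term_nonneg sums_poisson_mean)

lemma sums_arrivals_during_factorial_moment:
  assumes "integrable B (\<lambda>x. x\<^sup>2)"
  shows "(\<lambda>k. real k * (real k - 1) * arrivals_during lam B k) sums (lam\<^sup>2 * (\<integral>x. x\<^sup>2 \<partial>B))"
proof -
  have "(\<lambda>k. (real k * (real k - 1)) * arrivals_during lam B k) sums (\<integral>x. (lam * x)\<^sup>2 \<partial>B)"
  proof (rule sums_integral_poisson)
    show "0 \<le> real k * (real k - 1) * poisson_term y k" if "0 \<le> y" for k y
      using poisson_term_nonneg[OF that, of k] by (cases k) auto
  qed (simp_all add: sums_poisson_factorial_moment power_mult_distrib assms)
  then show ?thesis by (simp add: power_mult_distrib)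
qed

lemma arrivals_during_0_pos: "0 < arrivals_during lam B 0"
proof -
  have int: "integrable B (\<lambda>x. exp (- lam * x))"
  proof (rule Bochner_Integration.integrable_bound)
    show "integrable B (\<lambda>_. 1::real)"
      by (rule finite_measure.integrable_const[OF prob_space.axioms(1)[OF prob]])
    show "(\<lambda>x. exp (- lam * x)) \<in> borel_measurable B"
      unfolding measurable_B_iff by measurable
    show "AE x in B. norm (exp (- lam * x)) \<le> norm (1::real)"
      using nonneg by eventually_elim (use lam_pos in simp)
  qed
  have "arrivals_during lam B 0 \<noteq> 0"
  proof
    assume "arrivals_during lam B 0 = 0"
    then have "AE x in B. exp (- lam * x) = 0"
      using integral_nonneg_eq_0_iff_AE[OF int] by (simp add: arrivals_during_def)
    then show False
      using prob_space.AE_False[OF prob] by simp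
  qed
  then show ?thesis
    using arrivals_during_nonneg[of 0] by simp
qed

end

section \<open>The threshold queue\<close>

locale threshold_queue =
  fixes lam :: real and B1 B2 :: "real measure"
  assumes lam_pos: "lam > 0"
    and B1_prob: "prob_space B1" and B1_borel: "sets B1 = sets borel"
    and B1_nonneg: "AE x in B1. 0 \<le> x"
    and B2_prob: "prob_space B2" and B2_borel: "sets B2 = sets borel"
    and B2_nonneg: "AE x in B2. 0 \<le> x"
    and B1_mean: "integrable B1 (\<lambda>x. x)" "lam * (\<integral>x. x \<partial>B1) = 1"
    and B1_second_moment: "integrable B1 (\<lambda>x. x ^ 2)"
    and B2_mean: "integrable B2 (\<lambda>x. x)" "lam * (\<integral>x. x \<partial>B2) < 1"
begin

sublocale S1: service_distribution lam B1
  by (simp add: service_distribution_def lam_pos B1_prob B1_borel B1_nonneg)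

sublocale S2: service_distribution lam B2
  by (simp add: service_distribution_def lam_pos B2_prob B2_borel B2_nonneg)

abbreviation a :: "nat \<Rightarrow> real" where "a \<equiv> arrivals_during lam B1"
abbreviation c :: "nat \<Rightarrow> real" where "c \<equiv> arrivals_during lam B2"

definition rho2 :: real where "rho2 = lam * (\<integral>x. x \<partial>B2)"

lemma rho2_less_1: "rho2 < 1"
  using B2_mean by (simp add: rho2_def)

lemma sums_tail_a: "tail a sums 1"
  using sums_tail[OF S1.arrivals_during_nonneg sums_summable[OF S1.sums_arrivals_during]
      S1.sums_arrivals_during_mean[OF B1_mean(1)]] B1_mean(2) by simp

lemma sums_tail_c: "tail c sums rho2"
  using sums_tail[OF S2.arrivals_during_nonneg sums_summable[OF S2.sums_arrivals_during]
      S2.sums_arrivals_during_mean[OF B2_mean(1)]] by (simp add: rho2_def)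

lemma tail_a_nonneg: "0 \<le> tail a m"
  by (rule tail_nonneg[OF S1.arrivals_during_nonneg sums_summable[OF S1.sums_arrivals_during]])

lemma tail_c_nonneg: "0 \<le> tail c m"
  by (rule tail_nonneg[OF S2.arrivals_during_nonneg sums_summable[OF S2.sums_arrivals_during]])

lemma tail_a_eq: "tail a m = 1 - (\<Sum>k\<le>m. a k)"
  by (rule tail_eq[OF S1.sums_arrivals_during])

lemma tail_c_eq: "tail c m = 1 - (\<Sum>k\<le>m. c k)"
  by (rule tail_eq[OF S2.sums_arrivals_during])

text \<open>This is where the finite second moment of \<open>B1\<close> enters.\<close>
lemma summable_tail_tail_a: "summable (tail (tail a))"
proof -
  have "summable (\<lambda>k. (\<Sum>m<k. real m) * a k)"
  proof (rule summable_comparison_test')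
    show "summable (\<lambda>k. real k * (real k - 1) * a k)"
      using S1.sums_arrivals_during_factorial_moment[OF B1_second_moment] by (rule sums_summable)
    show "norm ((\<Sum>m<k. real m) * a k) \<le> real k * (real k - 1) * a k" for k
    proof -
      have "(\<Sum>m<k. real m) \<le> (\<Sum>m<k. real k - 1)"
        by (intro sum_mono) auto
      then show ?thesis
        using S1.arrivals_during_nonneg[of k] by (simp add: abs_mult sum_nonneg mult_right_mono)
    qed
  qed
  then have "summable (\<lambda>m. real m * tail a m)"
    using sums_weighted_tail[OF S1.arrivals_during_nonneg _ sums_summable[OF S1.sums_arrivals_during]]
    by (auto simp: sums_iff)
  then show ?thesis
    using sums_tail[OF tail_a_nonneg sums_summable[OF sums_tail_a]] by (auto simp: sums_iff)
qed

lemma sums_tail_a_Suc: "(\<lambda>m. tail a (Suc m)) sums a 0"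
  using sums_Suc_iff[of "tail a" "a 0"] sums_tail_a by (simp add: tail_a_eq)

lemma tail_a_1_pos: "0 < tail a 1"
proof (rule ccontr)
  assume "\<not> 0 < tail a 1"
  then have zero: "tail a (Suc m) = 0" for m
  proof (induction m)
    case (Suc m)
    have "tail a (Suc (Suc m)) = tail a (Suc m) - a (Suc (Suc m))"
      by (rule tail_Suc)
    then show ?case
      using Suc tail_a_nonneg[of "Suc (Suc m)"] S1.arrivals_during_nonneg[of "Suc (Suc m)"]
      by linarith
  qed (use tail_a_nonneg[of 1] in simp)
  then have "a 0 = 0"
    using sums_tail_a_Suc by (simp add: sums_iff)
  then show False
    using S1.arrivals_during_0_pos by simp
qed

definition ratio_kernel :: "nat \<Rightarrow> real" where
  "ratio_kernel m = (if m = 0 then 0 else tail a m / a 0)"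

definition ratio_source :: "nat \<Rightarrow> real" where
  "ratio_source k = a k / a 0"

lemma sums_ratio_kernel: "ratio_kernel sums 1"
proof -
  have "(\<lambda>m. ratio_kernel (Suc m)) sums 1"
    using sums_divide[OF sums_tail_a_Suc, of "a 0"] S1.arrivals_during_0_pos
    by (simp add: ratio_kernel_def)
  then show ?thesis
    using sums_Suc_iff[of ratio_kernel 1] by (simp add: ratio_kernel_def)
qed

lemma tail_ratio_kernel: "tail ratio_kernel m = tail (tail a) m / a 0"
proof -
  have "(\<Sum>k\<le>m. ratio_kernel k) = ((\<Sum>k\<le>m. tail a k) - tail a 0) / a 0"
    using S1.arrivals_during_0_pos by (induction m) (simp_all add: ratio_kernel_def field_simps)
  then show ?thesis
    using S1.arrivals_during_0_pos
    by (simp add: tail_eq[OF sums_ratio_kernel] tail_eq[OF sums_tail_a] tail_a_eq field_simps)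
qed

sublocale R: renewal_kernel ratio_kernel
proof
  show "ratio_kernel 0 = 0" "0 < ratio_kernel 1"
    using tail_a_1_pos S1.arrivals_during_0_pos by (simp_all add: ratio_kernel_def)
  show "0 \<le> ratio_kernel m" for m
    using tail_a_nonneg[of m] S1.arrivals_during_nonneg[of 0] by (simp add: ratio_kernel_def)
  show "ratio_kernel sums 1"
    by (rule sums_ratio_kernel)
  show "summable (tail ratio_kernel)"
    unfolding tail_ratio_kernel[abs_def] by (rule summable_divide[OF summable_tail_tail_a])
qed

definition ratio :: "nat \<Rightarrow> real" where
  "ratio = renewal_seq ratio_kernel ratio_source"

definition ratio_limit :: real where
  "ratio_limit = suminf ratio_source / suminf (tail ratio_kernel)"

lemma ratio_source_nonneg: "0 \<le> ratio_source k"
  using S1.arrivals_during_nonneg[of k] S1.arrivals_during_0_pos by (simp add: ratio_source_def)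

lemma sums_ratio_source: "ratio_source sums (1 / a 0)"
  unfolding ratio_source_def[abs_def] by (rule sums_divide[OF S1.sums_arrivals_during])

lemma ratio_tendsto: "ratio \<longlonglongrightarrow> ratio_limit"
  unfolding ratio_def ratio_limit_def
  by (rule R.renewal_theorem[OF ratio_source_nonneg sums_summable[OF sums_ratio_source]])

lemma ratio_limit_pos: "0 < ratio_limit"
  using R.suminf_tail_f_ge_1 S1.arrivals_during_0_pos sums_unique[OF sums_ratio_source, symmetric]
  by (simp add: ratio_limit_def)

lemma ratio_nonneg: "0 \<le> ratio n"
  unfolding ratio_def by (rule R.renewal_seq_nonneg[OF ratio_source_nonneg])

lemma ratio_le: "ratio n \<le> suminf ratio_source"
  unfolding ratio_def
  by (rule R.renewal_seq_le_suminf[OF ratio_source_nonneg sums_summable[OF sums_ratio_source]])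

lemma ratio_0: "ratio 0 = 1"
  using renewal_seq.simps[of ratio_kernel ratio_source 0] S1.arrivals_during_0_pos
  by (simp add: ratio_def ratio_source_def)

lemma ratio_recurrence:
  "ratio (Suc n) * a 0 = tail a n + (\<Sum>i=1..n. ratio i * tail a (Suc n - i))"
proof -
  have atMost_eq: "{..n} = insert 0 {1..n}"
    by auto
  have "ratio (Suc n) * a 0 = a (Suc n) + (\<Sum>i\<le>n. ratio i * tail a (Suc n - i))"
    using renewal_seq.simps[of ratio_kernel ratio_source "Suc n"] S1.arrivals_during_0_pos
    by (simp add: ratio_def[symmetric] ratio_source_def ratio_kernel_def lessThan_Suc_atMost
        sum_divide_distrib[symmetric] field_simps)
  also have "\<dots> = tail a n + (\<Sum>i=1..n. ratio i * tail a (Suc n - i))"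
    by (simp add: atMost_eq ratio_0 tail_Suc)
  finally show ?thesis .
qed

definition tail_mass_bound :: real where
  "tail_mass_bound = (1 + suminf ratio_source * suminf (tail (tail a))) / (1 - rho2)"

lemma tail_mass_bound_nonneg: "0 \<le> tail_mass_bound"
  unfolding tail_mass_bound_def using rho2_less_1
  by (intro divide_nonneg_nonneg add_nonneg_nonneg mult_nonneg_nonneg suminf_nonneg
      sums_summable[OF sums_ratio_source] ratio_source_nonneg summable_tail_tail_a
      tail_nonneg tail_a_nonneg sums_summable[OF sums_tail_a]) auto

context
  fixes L :: nat and Q :: "nat \<Rightarrow> real"
  assumes stationary: "stationary_dist (thr_trans lam B1 B2 L) Q"
begin

abbreviation P :: "nat \<Rightarrow> nat \<Rightarrow> real" where
  "P \<equiv> thr_trans lam B1 B2 L"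

lemma Q_nonneg: "0 \<le> Q i"
  using stationary by (simp add: stationary_dist_def)

lemma sums_Q: "Q sums 1"
  using stationary by (simp add: stationary_dist_def)

lemma balance: "Q j = (\<Sum>i\<le>Suc j. Q i * P i j)"
proof -
  have "(\<lambda>i. Q i * P i j) sums (\<Sum>i\<le>Suc j. Q i * P i j)"
    by (rule sums_finite) (auto simp: thr_trans_def)
  moreover have "(\<lambda>i. Q i * P i j) sums Q j"
    using stationary by (simp add: stationary_dist_def)
  ultimately show ?thesis
    using sums_unique2 by blast
qed

lemma sum_row_thr_trans:
  "(\<Sum>j\<le>n. P i j) = (if i = 0 then (\<Sum>k\<le>n. a k) else if Suc n < i then 0
     else if i \<le> L then (\<Sum>k\<le>Suc n - i. a k) else (\<Sum>k\<le>Suc n - i. c k))"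
proof (induction n)
  case (Suc n)
  consider "i = 0" | "Suc (Suc n) < i" | "Suc (Suc n) = i" | "0 < i" "i \<le> Suc n"
    by linarith
  then show ?case
  proof cases
    case 4
    then have "Suc (Suc n) - i = Suc (Suc n - i)" by simp
    with 4 show ?thesis using Suc by (simp add: thr_trans_def)
  qed (use Suc in \<open>auto simp: thr_trans_def\<close>)
qed (auto simp: thr_trans_def)

text \<open>In stationarity the probability flow from \<open>{0..n}\<close> up to \<open>{n+1..}\<close> equals the flow
  down from \<open>n + 1\<close>, the only state above \<open>n\<close> that can reach \<open>{0..n}\<close> in one step.\<close>
lemma level_crossing: "Q (Suc n) * P (Suc n) n = (\<Sum>i\<le>n. Q i * (1 - (\<Sum>j\<le>n. P i j)))"
proof -
  have "(\<Sum>j\<le>n. Q j) = (\<Sum>j\<le>n. \<Sum>i\<le>Suc n. Q i * P i j)"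
  proof (rule sum.cong[OF refl])
    fix j assume "j \<in> {..n}"
    then have "(\<Sum>i\<le>Suc n. Q i * P i j) = (\<Sum>i\<le>Suc j. Q i * P i j)"
      by (intro sum.mono_neutral_right) (auto simp: thr_trans_def)
    then show "Q j = (\<Sum>i\<le>Suc n. Q i * P i j)"
      using balance[of j] by simp
  qed
  also have "\<dots> = (\<Sum>i\<le>Suc n. Q i * (\<Sum>j\<le>n. P i j))"
    by (subst sum.swap) (simp add: sum_distrib_left)
  also have "\<dots> = (\<Sum>i\<le>n. Q i * (\<Sum>j\<le>n. P i j)) + Q (Suc n) * P (Suc n) n"
  proof -
    have "(\<Sum>j\<le>n. P (Suc n) j) = P (Suc n) n"
      by (simp add: sum_row_thr_trans) (simp add: thr_trans_def)
    then show ?thesis by simp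
  qed
  finally show ?thesis
    by (simp add: algebra_simps sum_subtractf)
qed

lemma level_crossing_tails:
  "Q (Suc n) * (if Suc n \<le> L then a 0 else c 0)
     = Q 0 * tail a n + (\<Sum>i=1..n. Q i * (if i \<le> L then tail a (Suc n - i) else tail c (Suc n - i)))"
proof -
  have "1 - (\<Sum>j\<le>n. P i j) = (if i \<le> L then tail a (Suc n - i) else tail c (Suc n - i))"
    if "i \<in> {1..n}" for i
    using that by (simp add: sum_row_thr_trans tail_a_eq tail_c_eq)
  moreover have "1 - (\<Sum>j\<le>n. P 0 j) = tail a n"
    by (simp add: sum_row_thr_trans tail_a_eq)
  ultimately have "(\<Sum>i\<le>n. Q i * (1 - (\<Sum>j\<le>n. P i j)))
      = Q 0 * tail a n + (\<Sum>i=1..n. Q i * (if i \<le> L then tail a (Suc n - i) else tail c (Suc n - i)))"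
    by (simp add: atMost_atLeast0 sum.atLeast_Suc_atMost)
  moreover have "P (Suc n) n = (if Suc n \<le> L then a 0 else c 0)"
    by (simp add: thr_trans_def)
  ultimately show ?thesis
    using level_crossing[of n] by simp
qed

lemma Q_eq_ratio: "N \<le> L \<Longrightarrow> Q N = Q 0 * ratio N"
proof (induction N rule: less_induct)
  case (less N)
  show ?case
  proof (cases N)
    case (Suc n)
    have IH: "Q i * tail a (N - i) = Q 0 * (ratio i * tail a (N - i))" if "i \<in> {1..n}" for i
      using that less.IH[of i] less.prems Suc by simp
    have "Q N * a 0 = Q 0 * tail a n + (\<Sum>i=1..n. Q i * tail a (N - i))"
      using level_crossing_tails[of n] less.prems by (simp add: Suc)
    also have "\<dots> = Q 0 * (tail a n + (\<Sum>i=1..n. ratio i * tail a (N - i)))"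
      by (simp add: IH sum_distrib_left distrib_left)
    also have "\<dots> = Q 0 * ratio N * a 0"
      by (simp add: Suc ratio_recurrence)
    finally show ?thesis
      using S1.arrivals_during_0_pos by simp
  qed (simp add: ratio_0)
qed

lemma level_crossing_above_threshold:
  assumes "L \<le> n"
  shows "Q (Suc n) * c 0 = Q 0 * tail a n + (\<Sum>i=1..L. Q i * tail a (Suc n - i))
           + (\<Sum>i=Suc L..n. Q i * tail c (Suc n - i))"
proof -
  let ?g = "\<lambda>i. Q i * (if i \<le> L then tail a (Suc n - i) else tail c (Suc n - i))"
  have "{1..n} = {1..L} \<union> {Suc L..n}"
    using assms by auto
  then have "(\<Sum>i=1..n. ?g i) = (\<Sum>i=1..L. ?g i) + (\<Sum>i=Suc L..n. ?g i)"
    by (simp add: sum.union_disjoint)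
  moreover have "(\<Sum>i=1..L. ?g i) = (\<Sum>i=1..L. Q i * tail a (Suc n - i))"
    by (rule sum.cong) auto
  moreover have "(\<Sum>i=Suc L..n. ?g i) = (\<Sum>i=Suc L..n. Q i * tail c (Suc n - i))"
    by (rule sum.cong) auto
  ultimately show ?thesis
    using level_crossing_tails[of n] assms by (simp add: add.assoc)
qed

lemma summed_level_crossing:
  assumes "L \<le> N"
  shows "c 0 * (\<Sum>n=L..N. Q (Suc n)) = Q 0 * (\<Sum>n=L..N. tail a n)
      + (\<Sum>i=1..L. Q i * (\<Sum>n=L..N. tail a (Suc n - i)))
      + (\<Sum>i=Suc L..N. Q i * (\<Sum>n=i..N. tail c (Suc n - i)))"
proof -
  have "c 0 * (\<Sum>n=L..N. Q (Suc n)) = (\<Sum>n=L..N. Q 0 * tail a n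
      + (\<Sum>i=1..L. Q i * tail a (Suc n - i)) + (\<Sum>i=Suc L..n. Q i * tail c (Suc n - i)))"
    unfolding sum_distrib_left
    by (intro sum.cong refl) (simp add: mult.commute level_crossing_above_threshold)
  also have "\<dots> = Q 0 * (\<Sum>n=L..N. tail a n)
      + (\<Sum>i=1..L. \<Sum>n=L..N. Q i * tail a (Suc n - i))
      + (\<Sum>i=Suc L..N. \<Sum>n=i..N. Q i * tail c (Suc n - i))"
    by (simp add: sum.distrib sum_distrib_left sum_triangle_swap sum.swap[of _ "{L..N}"])
  finally show ?thesis
    by (simp add: sum_distrib_left)
qed

lemma overflow_below_threshold_le:
  "(\<Sum>i=1..L. Q i * (\<Sum>n=L..N. tail a (Suc n - i)))
     \<le> Q 0 * suminf ratio_source * suminf (tail (tail a))"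
proof -
  have "(\<Sum>i=1..L. Q i * (\<Sum>n=L..N. tail a (Suc n - i)))
      \<le> (\<Sum>i=1..L. Q 0 * suminf ratio_source * tail (tail a) (L - i))"
  proof (intro sum_mono mult_mono)
    fix i assume i: "i \<in> {1..L}"
    show "Q i \<le> Q 0 * suminf ratio_source"
      using i Q_eq_ratio[of i] ratio_le[of i] Q_nonneg[of 0] by (simp add: mult_left_mono)
    have "(\<Sum>n=L..N. tail a (Suc n - i)) = (\<Sum>k=Suc L - i..Suc N - i. tail a k)"
      using i by (intro sum_shift_diff) simp
    also have "\<dots> \<le> tail (tail a) (L - i)"
      using i by (intro sum_le_tail[OF tail_a_nonneg sums_summable[OF sums_tail_a]]) auto
    finally show "(\<Sum>n=L..N. tail a (Suc n - i)) \<le> tail (tail a) (L - i)" .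
  qed (auto intro: mult_nonneg_nonneg Q_nonneg suminf_nonneg sums_summable[OF sums_ratio_source]
      ratio_source_nonneg tail_a_nonneg sum_nonneg)
  also have "\<dots> = Q 0 * suminf ratio_source * (\<Sum>k<L. tail (tail a) k)"
    by (simp add: sum_distrib_left)
      (rule sum.reindex_bij_witness[where i="\<lambda>k. L - k" and j="\<lambda>i. L - i"]; auto)
  also have "(\<Sum>k<L. tail (tail a) k) \<le> suminf (tail (tail a))"
    by (rule sum_le_suminf[OF summable_tail_tail_a])
       (auto intro: tail_nonneg tail_a_nonneg sums_summable[OF sums_tail_a])
  finally show ?thesis
    using Q_nonneg[of 0] suminf_nonneg[OF sums_summable[OF sums_ratio_source] ratio_source_nonneg]
    by (simp add: mult_left_mono)
qed

lemma overflow_above_threshold_le: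
  "(\<Sum>i=Suc L..N. Q i * (\<Sum>n=i..N. tail c (Suc n - i))) \<le> (rho2 - tail c 0) * (\<Sum>i=Suc L..N. Q i)"
proof -
  have "(\<Sum>n=i..N. tail c (Suc n - i)) \<le> rho2 - tail c 0" for i
  proof -
    have "(\<Sum>n=i..N. tail c (Suc n - i)) = (\<Sum>k=1..Suc N - i. tail c k)"
      by (simp add: sum_shift_diff)
    also have "\<dots> \<le> tail (tail c) 0"
      by (rule sum_le_tail[OF tail_c_nonneg sums_summable[OF sums_tail_c]]) simp
    finally show ?thesis
      by (simp add: tail_eq[OF sums_tail_c])
  qed
  then show ?thesis
    by (auto simp: sum_distrib_right mult.commute intro: sum_mono mult_left_mono Q_nonneg)
qed

lemma tail_mass_le:
  assumes "L \<le> N"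
  shows "(1 - rho2) * (\<Sum>i=Suc L..N. Q i) \<le> Q 0 * (1 + suminf ratio_source * suminf (tail (tail a)))"
proof -
  define T where "T = (\<Sum>i=Suc L..N. Q i)"
  have "Q 0 * (\<Sum>n=L..N. tail a n) \<le> Q 0 * 1"
    by (intro mult_left_mono sum_le_sums[OF tail_a_nonneg sums_tail_a] Q_nonneg) simp
  moreover have "c 0 * T \<le> c 0 * (\<Sum>n=L..N. Q (Suc n))"
    unfolding T_def sum.shift_bounds_cl_Suc_ivl[symmetric]
    by (intro mult_left_mono sum_mono2 S2.arrivals_during_nonneg) (auto simp: Q_nonneg)
  ultimately have "c 0 * T \<le> Q 0 + Q 0 * suminf ratio_source * suminf (tail (tail a))
      + (rho2 - tail c 0) * T"
    using summed_level_crossing[OF assms] overflow_below_threshold_le[of N]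
      overflow_above_threshold_le[of N]
    by (simp add: T_def)
  then show ?thesis
    by (simp add: T_def tail_c_eq algebra_simps)
qed

lemma sum_Q_below_threshold: "(\<Sum>i\<le>L. Q i) = Q 0 * (\<Sum>i\<le>L. ratio i)"
  unfolding sum_distrib_left by (intro sum.cong refl Q_eq_ratio) simp

lemma Q_0_mult_sum_ratio_le_1: "Q 0 * (\<Sum>i\<le>L. ratio i) \<le> 1"
proof -
  have "Q 0 * (\<Sum>i\<le>L. ratio i) = (\<Sum>i\<le>L. Q i)"
    by (rule sum_Q_below_threshold[symmetric])
  also have "\<dots> \<le> 1"
    by (rule sum_le_sums[OF Q_nonneg sums_Q]) simp
  finally show ?thesis .
qed

lemma one_le_Q_0_mult: "1 \<le> Q 0 * ((\<Sum>i\<le>L. ratio i) + tail_mass_bound)"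
proof (rule LIMSEQ_le_const2)
  show "(\<lambda>N. \<Sum>i<N. Q i) \<longlonglongrightarrow> 1"
    using sums_Q by (simp add: sums_def)
  show "\<exists>N0. \<forall>N\<ge>N0. (\<Sum>i<N. Q i) \<le> Q 0 * ((\<Sum>i\<le>L. ratio i) + tail_mass_bound)"
  proof (intro exI allI impI)
    fix N assume N: "Suc L \<le> N"
    have "{..<N} = {..L} \<union> {Suc L..N - 1}" "{..L} \<inter> {Suc L..N - 1} = {}"
      using N by auto
    then have "(\<Sum>i<N. Q i) = (\<Sum>i\<le>L. Q i) + (\<Sum>i=Suc L..N - 1. Q i)"
      by (simp add: sum.union_disjoint)
    also have "(\<Sum>i\<le>L. Q i) = Q 0 * (\<Sum>i\<le>L. ratio i)"
      by (rule sum_Q_below_threshold)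
    also have "(\<Sum>i=Suc L..N - 1. Q i) \<le> Q 0 * tail_mass_bound"
      using tail_mass_le[of "N - 1"] N rho2_less_1
      by (simp add: tail_mass_bound_def field_simps)
    finally show "(\<Sum>i<N. Q i) \<le> Q 0 * ((\<Sum>i\<le>L. ratio i) + tail_mass_bound)"
      by (simp add: algebra_simps)
  qed
qed

end

end

theorem lemma3:
  fixes lam :: real and B1 B2 :: "real measure" and q :: "nat \<Rightarrow> nat \<Rightarrow> real" and j :: nat
  assumes lam_pos: "lam > 0"
    and B1_prob: "prob_space B1" and B1_borel: "sets B1 = sets borel"
    and B1_nonneg: "AE x in B1. 0 \<le> x"
    and B2_prob: "prob_space B2" and B2_borel: "sets B2 = sets borel"
    and B2_nonneg: "AE x in B2. 0 \<le> x"
    and rho1: "integrable B1 (\<lambda>x. x)" "lam * (\<integral>x. x \<partial>B1) = 1"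
    and rho12: "integrable B1 (\<lambda>x. x ^ 2)"
    and rho2: "integrable B2 (\<lambda>x. x)" "lam * (\<integral>x. x \<partial>B2) < 1"
    and stat: "\<And>L. L \<ge> 1 \<Longrightarrow> stationary_dist (thr_trans lam B1 B2 L) (q L)"
  shows "(\<lambda>L. real L * q L (L - j)) \<longlonglongrightarrow> 1"
proof -
  interpret threshold_queue lam B1 B2
    by (simp add: threshold_queue_def assms)
  have "(\<lambda>L. real L * q L 0) \<longlonglongrightarrow> 1 / ratio_limit"
  proof (rule tendsto_real_mult_of_reciprocal_bounds[OF _ ratio_limit_pos tail_mass_bound_nonneg])
    show "(\<lambda>L. (\<Sum>i\<le>L. ratio i) / real L) \<longlonglongrightarrow> ratio_limit"
      by (rule cesaro_mean_tendsto[OF ratio_tendsto])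
    show "0 < (\<Sum>i\<le>L. ratio i)" for L
      using member_le_sum[of 0 "{..L}" ratio] ratio_nonneg by (simp add: ratio_0)
  qed (use Q_0_mult_sum_ratio_le_1[OF stat] one_le_Q_0_mult[OF stat] in auto)
  moreover have "(\<lambda>L. ratio (L - j)) \<longlonglongrightarrow> ratio_limit"
    by (rule filterlim_compose[OF ratio_tendsto filterlim_minus_const_nat_at_top])
  ultimately have "(\<lambda>L. real L * q L 0 * ratio (L - j)) \<longlonglongrightarrow> 1"
    using tendsto_mult ratio_limit_pos by fastforce
  moreover have "eventually (\<lambda>L. real L * q L 0 * ratio (L - j) = real L * q L (L - j)) sequentially"
    using eventually_ge_at_top[of 1]
    by eventually_elim (use Q_eq_ratio[OF stat, of _ "_ - j"] in simp)
  ultimately show ?thesis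
    by (rule Lim_transform_eventually)
qed

end
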